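(* Let $\mathcal{G}_{36}$ be the network described in the context, with nodes $(i,j)$, $1\le i\le 3$, $1\le j\le 6$. Consider the coloring $K$ of its nodes with five colors $a_0,a_1,a_2,b_1,b_2$ defined by: for $1\le j\le 3$, node $(i,j)$ has color $a_r$ where $r\equiv j-i \pmod 3$, $r\in\{0,1,2\}$; for $4\le j\le 6$, node $(i,j)$ has color $b_1$ if $j-3=i$ and color $b_2$ if $j-3\neq i$. Then $K$ is balanced, but $K$ is not an orbit coloring, i.e. there is no subgroup $\Sigma\subseteq \mathbb{S}_3\times\mathbb{S}_6$ whose orbits on the node set are exactly the color classes of $K$.
   Context: For integers $m,n\ge1$, the network $\mathcal{G}_{mn}$ has node set $\{(i,j):1\le i\le m,\ 1\le j\le n\}$ (an $m\times n$ array; $i$ indexes rows, $j$ columns), all nodes of the same type. For each ordered pair of distinct nodes $(c,d)$ there is exactly one arrow with head $c$ and tail $d$, whose type is: "row" if $c,d$ lie in the same row, "column" if they lie in the same column, "diagonal" otherwise; in addition each node has an internal arrow from itself to itself (a fourth type). The group $\mathbb{S}_m\times\mathbb{S}_n$ acts on the nodes by $(\sigma,\tau)\cdot(i,j)=(\sigma(i),\tau(j))$; these permutations preserve arrow types and form the symmetry group of $\mathcal{G}_{mn}$. A coloring is a map from nodes to a set of colors (colorings are identified if they induce the same partition of the nodes). A coloring is balanced if whenever nodes $c,d$ have the same color there is a bijection between the input arrows of $c$ and those of $d$ preserving arrow type and the color of the tail node; equivalently, for every arrow type and every color $k$, the number of input arrows of that type to $c$ with tail of color $k$ equals the corresponding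 number for $d$. For a subgroup $\Sigma$ of the symmetry group, the orbit coloring of $\Sigma$ is the coloring whose color classes are the $\Sigma$-orbits on nodes; a coloring is an orbit coloring if it equals the orbit coloring of some such subgroup. *)

theory Defs
  imports "HOL-Algebra.Sym_Groups"
begin

definition nodes :: "nat \<Rightarrow> nat \<Rightarrow> (nat \<times> nat) set" where
  "nodes m n = {1..m} \<times> {1..n}"

datatype arrow_type = RowArrow | ColumnArrow | DiagonalArrow | InternalArrow

text \<open>Type of the unique arrow with head c and tail d.\<close>
definition arrow_type :: "nat \<times> nat \<Rightarrow> nat \<times> nat \<Rightarrow> arrow_type" where
  "arrow_type c d =
     (if c = d then InternalArrow
      else if fst c = fst d then RowArrow
      else if snd c = snd d then ColumnArrow
      else DiagonalArrow)"

definition input_count ::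
    "nat \<Rightarrow> nat \<Rightarrow> (nat \<times> nat \<Rightarrow> 'c) \<Rightarrow> arrow_type \<Rightarrow> 'c \<Rightarrow> nat \<times> nat \<Rightarrow> nat" where
  "input_count m n K t k c = card {d \<in> nodes m n. arrow_type c d = t \<and> K d = k}"

definition balanced :: "nat \<Rightarrow> nat \<Rightarrow> (nat \<times> nat \<Rightarrow> 'c) \<Rightarrow> bool" where
  "balanced m n K \<longleftrightarrow>
     (\<forall>c\<in>nodes m n. \<forall>d\<in>nodes m n. K c = K d \<longrightarrow>
        (\<forall>t k. input_count m n K t k c = input_count m n K t k d))"

abbreviation symmetry_group :: "nat \<Rightarrow> nat \<Rightarrow> ((nat \<Rightarrow> nat) \<times> (nat \<Rightarrow> nat)) monoid" where
  "symmetry_group m n \<equiv> sym_group m \<times>\<times> sym_group n"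

definition act :: "(nat \<Rightarrow> nat) \<times> (nat \<Rightarrow> nat) \<Rightarrow> nat \<times> nat \<Rightarrow> nat \<times> nat" where
  "act g x = (fst g (fst x), snd g (snd x))"

text \<open>K is the orbit coloring of \<Sigma>: two nodes have the same color iff they lie in the
  same \<Sigma>-orbit (colorings are identified up to renaming of colors).\<close>
definition is_orbit_coloring_of ::
    "nat \<Rightarrow> nat \<Rightarrow> (nat \<times> nat \<Rightarrow> 'c) \<Rightarrow> ((nat \<Rightarrow> nat) \<times> (nat \<Rightarrow> nat)) set \<Rightarrow> bool" where
  "is_orbit_coloring_of m n K \<Sigma> \<longleftrightarrow>
     (\<forall>x\<in>nodes m n. \<forall>y\<in>nodes m n. K x = K y \<longleftrightarrow> (\<exists>g\<in>\<Sigma>. act g x = y))"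

definition orbit_coloring :: "nat \<Rightarrow> nat \<Rightarrow> (nat \<times> nat \<Rightarrow> 'c) \<Rightarrow> bool" where
  "orbit_coloring m n K \<longleftrightarrow>
     (\<exists>\<Sigma>. subgroup \<Sigma> (symmetry_group m n) \<and> is_orbit_coloring_of m n K \<Sigma>)"

datatype color = a nat | b nat

definition K36 :: "nat \<times> nat \<Rightarrow> color" where
  "K36 x = (let i = fst x; j = snd x in
     if j \<le> 3 then a (nat ((int j - int i) mod 3))
     else if j - 3 = i then b 1 else b 2)"

end

theory Submission
  imports Defs
begin

(* Balance is a finite count: the five colors are represented by the nodes (1,1), (1,2), (1,3),
   (1,4), (1,5), and every node has the same input counts as the representative of its color.
   K is not an orbit coloring: a symmetry (s,t) in the group sending (1,5) to (1,6), both of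
   color b_2, fixes row 1, hence fixes column 1, since (1,1) is the only node of color a_0 in
   row 1. It maps (2,5), of color b_1, to (s 2, 6), which forces s 2 = 3; but then (2,1), of
   color a_2, is sent to (3,1), of color a_1. *)

lemma nodes_eq_set_product: "nodes m n = set (List.product [1..<Suc m] [1..<Suc n])"
  by (auto simp: nodes_def)

lemma input_count_eq_length_filter:
  "input_count m n K t k c =
     length (filter (\<lambda>d. arrow_type c d = t \<and> K d = k) (List.product [1..<Suc m] [1..<Suc n]))"
  unfolding input_count_def nodes_eq_set_product set_filter [symmetric]
  by (intro distinct_card distinct_filter distinct_product distinct_upt)

lemma balancedI_representatives:
  assumes "\<And>c t k. c \<in> nodes m n \<Longrightarrow> k \<in> K ` nodes m n \<Longrightarrow>
             input_count m n K t k c = input_count m n K t k (rep (K c))"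
  shows "balanced m n K"
  unfolding balanced_def
proof (intro ballI impI allI)
  fix c d t k
  assume c: "c \<in> nodes m n" and d: "d \<in> nodes m n" and same_color: "K c = K d"
  show "input_count m n K t k c = input_count m n K t k d"
  proof (cases "k \<in> K ` nodes m n")
    case True
    then show ?thesis using assms[OF c] assms[OF d] same_color by simp
  next
    case False
    then have "{d \<in> nodes m n. arrow_type e d = t \<and> K d = k} = {}" for e by blast
    then show ?thesis by (simp only: input_count_def card.empty)
  qed
qed

lemma symmetry_group_permutes:
  assumes "g \<in> carrier (symmetry_group m n)"
  shows "fst g permutes {1..m}" and "snd g permutes {1..n}"
  using assms by (auto simp: sym_group_def)

lemma act_in_nodes:
  assumes "g \<in> carrier (symmetry_group m n)" and "x \<in> nodes m n"
  shows "act g x \<in> nodes m n"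
  using assms(2) permutes_in_image [OF symmetry_group_permutes(1) [OF assms(1)]]
    permutes_in_image [OF symmetry_group_permutes(2) [OF assms(1)]]
  by (simp add: nodes_def act_def mem_Times_iff)

lemma orbit_coloring_of_invariant:
  assumes "is_orbit_coloring_of m n K \<Sigma>" and "\<Sigma> \<subseteq> carrier (symmetry_group m n)"
    and "g \<in> \<Sigma>" and "x \<in> nodes m n"
  shows "K (act g x) = K x"
proof -
  have "g \<in> carrier (symmetry_group m n)"
    using assms(2,3) by (rule subsetD)
  then have "act g x \<in> nodes m n"
    using assms(4) by (rule act_in_nodes)
  then have "K x = K (act g x) \<longleftrightarrow> (\<exists>h\<in>\<Sigma>. act h x = act g x)"
    using assms(1,4) unfolding is_orbit_coloring_of_def by blast
  then show ?thesis
    using assms(3) by auto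
qed

fun color_representative :: "color \<Rightarrow> nat \<times> nat" where
  "color_representative (a r) = (1, 1 + r)"
| "color_representative (b r) = (if r = 1 then (1, 4) else (1, 5))"

lemma K36_range: "K36 ` nodes 3 6 \<subseteq> {a 0, a 1, a 2, b 1, b 2}"
  unfolding nodes_eq_set_product by (simp add: K36_def upt_rec del: set_product)

lemma input_count_K36_eq_representative:
  "\<forall>c\<in>nodes 3 6. \<forall>k\<in>{a 0, a 1, a 2, b 1, b 2}.
     input_count 3 6 K36 t k c = input_count 3 6 K36 t k (color_representative (K36 c))"
  unfolding nodes_eq_set_product input_count_eq_length_filter
  by (cases t) (simp_all add: upt_rec arrow_type_def K36_def del: set_product)

lemma balanced_K36: "balanced 3 6 K36"
  using input_count_K36_eq_representative K36_range
  by (intro balancedI_representatives [where rep = color_representative]) blast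

lemma K36_invariant_act_1_5_ne_1_6:
  assumes g: "g \<in> carrier (symmetry_group 3 6)"
    and invariant: "\<And>x. x \<in> nodes 3 6 \<Longrightarrow> K36 (act g x) = K36 x"
  shows "act g (1, 5) \<noteq> (1, 6)"
proof
  assume "act g (1, 5) = (1, 6)"
  then have s1: "fst g 1 = 1" and t5: "snd g 5 = 6" by (simp_all add: act_def)
  have "fst g 2 \<in> {1..3}" and "snd g 1 \<in> {1..6}"
    using permutes_in_image [OF symmetry_group_permutes(1) [OF g]]
      permutes_in_image [OF symmetry_group_permutes(2) [OF g]] by simp_all
  then have s2_range: "fst g 2 \<in> {1, 2, 3}" and t1_range: "snd g 1 \<in> {1, 2, 3, 4, 5, 6}"
    by auto
  have "K36 (1, snd g 1) = a 0"
    using invariant [of "(1, 1)"] s1 by (simp add: nodes_def act_def K36_def)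
  with t1_range have t1: "snd g 1 = 1"
    by (auto simp: K36_def)
  have "K36 (fst g 2, 6) = b 1"
    using invariant [of "(2, 5)"] t5 by (simp add: nodes_def act_def K36_def)
  with s2_range have s2: "fst g 2 = 3"
    by (auto simp: K36_def)
  have "K36 (fst g 2, snd g 1) = K36 (2, 1)"
    using invariant [of "(2, 1)"] by (simp add: nodes_def act_def)
  then show False
    using s2 t1 by (simp add: K36_def)
qed

lemma not_orbit_coloring_K36: "\<not> orbit_coloring 3 6 K36"
proof
  assume "orbit_coloring 3 6 K36"
  then obtain \<Sigma> where sub: "subgroup \<Sigma> (symmetry_group 3 6)"
    and orbits: "is_orbit_coloring_of 3 6 K36 \<Sigma>"
    unfolding orbit_coloring_def by blast
  have "(1, 5) \<in> nodes 3 6" "(1, 6) \<in> nodes 3 6" and "K36 (1, 5) = K36 (1, 6)"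
    by (simp_all add: nodes_def K36_def)
  then obtain g where g: "g \<in> \<Sigma>" and moves: "act g (1, 5) = (1, 6)"
    using orbits unfolding is_orbit_coloring_of_def by blast
  have sub_carrier: "\<Sigma> \<subseteq> carrier (symmetry_group 3 6)"
    using sub by (rule subgroup.subset)
  have "act g (1, 5) \<noteq> (1, 6)"
  proof (rule K36_invariant_act_1_5_ne_1_6)
    show "g \<in> carrier (symmetry_group 3 6)"
      using sub_carrier g by (rule subsetD)
    show "K36 (act g x) = K36 x" if "x \<in> nodes 3 6" for x
      using orbits sub_carrier g that by (rule orbit_coloring_of_invariant)
  qed
  with moves show False by contradiction
qed

theorem mainTheorem1:
  shows "balanced 3 6 K36 \<and> \<not> orbit_coloring 3 6 K36"
  using balanced_K36 not_orbit_coloring_K36 by blast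

end
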